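(* Let $G$ be a concurrent game structure, $T\subseteq S$, and assume all states of $T\cup W_2$ are absorbing. Given a player-1 selector $\xi_1$, the memoryless strategy $\overline{\xi}_1$ is proper if and only if for every pure player-2 selector $\xi_2$ and all states $s\in S$ we have $\Pr_s^{\overline{\xi}_1,\overline{\xi}_2}(\mathrm{Reach}(T\cup W_2))=1$.
   Context: Concurrent game structure $G=(S,M,\Gamma_1,\Gamma_2,\delta)$: finite states $S$, finite moves $M$, nonempty move sets $\Gamma_i(s)\subseteq M$, transition probabilities $\delta(s,a_1,a_2)\in\mathrm{Distr}(S)$ (moves chosen simultaneously and independently). A state is absorbing if every move pair leads back to it with probability 1. A selector for player $i$ assigns to each state $s$ a distribution on $\Gamma_i(s)$; it is pure if each such distribution is a point mass; $\overline{\xi}$ is the memoryless strategy playing $\xi$ at every step. Strategies map finite histories to distributions on available moves; $\Pr_s^{\pi_1,\pi_2}$ is the induced measure on plays from $s$. $\mathrm{Reach}(X)$ is the set of plays visiting $X$. $\mathrm{val}_1(\mathrm{Reach}(T))(s)=\sup_{\pi_1}\inf_{\pi_2}\Pr_s^{\pi_1,\pi_2}(\mathrm{Reach}(T))$ and $W_2=\{s:\mathrm{val}_1(\mathrm{Reach}(T))(s)=0\}$. A player-1 strategy $\pi_1$ is proper if for every player-2 strategy $\pi_2$ and all $s\in S\setminus(T\cup W_2)$, $\Pr_s^{\pi_1,\pi_2}(\mathrm{Reach}(T\cup W_2))=1$; a selector $\xi_1$ is proper if $\overline{\xi}_1$ is. *)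

theory Defs
  imports "HOL-Probability.Probability"
begin

text \<open>Concurrent game structure: states of finite type 's (S = UNIV), moves of finite
 type 'm (M = UNIV), available move sets G1 G2, transition function delta.
 Histories are nonempty lists of states, the last element being the current state.\<close>

definition game :: "('s::finite \<Rightarrow> 'm::finite set) \<Rightarrow> ('s \<Rightarrow> 'm set) \<Rightarrow> ('s \<Rightarrow> 'm \<Rightarrow> 'm \<Rightarrow> 's pmf) \<Rightarrow> bool" where
  "game G1 G2 delta \<longleftrightarrow> (\<forall>s. G1 s \<noteq> {} \<and> G2 s \<noteq> {})"

definition strategy :: "('s \<Rightarrow> 'm set) \<Rightarrow> ('s list \<Rightarrow> 'm pmf) \<Rightarrow> bool" where
  "strategy G p \<longleftrightarrow> (\<forall>h. h \<noteq> [] \<longrightarrow> set_pmf (p h) \<subseteq> G (last h))"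

definition selector :: "('s \<Rightarrow> 'm set) \<Rightarrow> ('s \<Rightarrow> 'm pmf) \<Rightarrow> bool" where
  "selector G xi \<longleftrightarrow> (\<forall>s. set_pmf (xi s) \<subseteq> G s)"

definition pure_selector :: "('s \<Rightarrow> 'm set) \<Rightarrow> ('s \<Rightarrow> 'm pmf) \<Rightarrow> bool" where
  "pure_selector G xi \<longleftrightarrow> selector G xi \<and> (\<forall>s. \<exists>a. xi s = return_pmf a)"

definition memoryless :: "('s \<Rightarrow> 'm pmf) \<Rightarrow> ('s list \<Rightarrow> 'm pmf)" where
  "memoryless xi = (\<lambda>h. xi (last h))"

definition step :: "('s \<Rightarrow> 'm \<Rightarrow> 'm \<Rightarrow> 's pmf) \<Rightarrow> ('s list \<Rightarrow> 'm pmf) \<Rightarrow> ('s list \<Rightarrow> 'm pmf)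
    \<Rightarrow> 's list \<Rightarrow> 's pmf" where
  "step delta pi1 pi2 h =
     bind_pmf (pi1 h) (\<lambda>a1. bind_pmf (pi2 h) (\<lambda>a2. delta (last h) a1 a2))"

fun reach_within :: "('s \<Rightarrow> 'm \<Rightarrow> 'm \<Rightarrow> 's pmf) \<Rightarrow> ('s list \<Rightarrow> 'm pmf) \<Rightarrow> ('s list \<Rightarrow> 'm pmf)
    \<Rightarrow> 's set \<Rightarrow> nat \<Rightarrow> 's list \<Rightarrow> real" where
  "reach_within delta pi1 pi2 X 0 h = (if last h \<in> X then 1 else 0)"
| "reach_within delta pi1 pi2 X (Suc n) h =
     (if last h \<in> X then 1
      else measure_pmf.expectation (step delta pi1 pi2 h)
             (\<lambda>t. reach_within delta pi1 pi2 X n (h @ [t])))"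

text \<open>Pr_s^{pi1,pi2}(Reach X), as the limit (= supremum) of the finite-horizon
 reachability probabilities (continuity of the path measure from below).\<close>
definition prob_reach :: "('s \<Rightarrow> 'm \<Rightarrow> 'm \<Rightarrow> 's pmf) \<Rightarrow> ('s list \<Rightarrow> 'm pmf) \<Rightarrow> ('s list \<Rightarrow> 'm pmf)
    \<Rightarrow> 's set \<Rightarrow> 's \<Rightarrow> real" where
  "prob_reach delta pi1 pi2 X s = (SUP n. reach_within delta pi1 pi2 X n [s])"

definition val1 :: "('s \<Rightarrow> 'm set) \<Rightarrow> ('s \<Rightarrow> 'm set) \<Rightarrow> ('s \<Rightarrow> 'm \<Rightarrow> 'm \<Rightarrow> 's pmf)
    \<Rightarrow> 's set \<Rightarrow> 's \<Rightarrow> real" where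
  "val1 G1 G2 delta T s =
     (SUP pi1\<in>{p. strategy G1 p}. INF pi2\<in>{p. strategy G2 p}. prob_reach delta pi1 pi2 T s)"

definition W2 :: "('s \<Rightarrow> 'm set) \<Rightarrow> ('s \<Rightarrow> 'm set) \<Rightarrow> ('s \<Rightarrow> 'm \<Rightarrow> 'm \<Rightarrow> 's pmf) \<Rightarrow> 's set \<Rightarrow> 's set" where
  "W2 G1 G2 delta T = {s. val1 G1 G2 delta T s = 0}"

definition absorbing :: "('s \<Rightarrow> 'm set) \<Rightarrow> ('s \<Rightarrow> 'm set) \<Rightarrow> ('s \<Rightarrow> 'm \<Rightarrow> 'm \<Rightarrow> 's pmf) \<Rightarrow> 's \<Rightarrow> bool" where
  "absorbing G1 G2 delta s \<longleftrightarrow> (\<forall>a1\<in>G1 s. \<forall>a2\<in>G2 s. delta s a1 a2 = return_pmf s)"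

definition proper :: "('s \<Rightarrow> 'm set) \<Rightarrow> ('s \<Rightarrow> 'm set) \<Rightarrow> ('s \<Rightarrow> 'm \<Rightarrow> 'm \<Rightarrow> 's pmf) \<Rightarrow> 's set
    \<Rightarrow> ('s list \<Rightarrow> 'm pmf) \<Rightarrow> bool" where
  "proper G1 G2 delta T pi1 \<longleftrightarrow>
     (\<forall>pi2. strategy G2 pi2 \<longrightarrow>
        (\<forall>s. s \<notin> T \<union> W2 G1 G2 delta T \<longrightarrow>
             prob_reach delta pi1 pi2 (T \<union> W2 G1 G2 delta T) s = 1))"

end

theory Submission
  imports Defs
begin

text \<open>Fix the memoryless strategy of player 1 and consider the positive attractor of the
  target: the states from which, whatever player 2 does, the target is reached within k steps
  with positive probability. On a finite state space this increasing sequence stabilises.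
  If its limit is not the whole state space, its complement is a trap in which player 2 can
  stay forever with a pure memoryless selector, so some pure selector avoids the target
  surely. Otherwise the target is reached within K steps with probability at least q^K
  against every strategy of player 2, where q is the least positive transition probability,
  and iterating this bound gives reachability with probability 1.\<close>

lemma expectation_pmf_finite:
  "measure_pmf.expectation (p :: 'a::finite pmf) f = (\<Sum>a\<in>UNIV. f a * pmf p a)"
  by (rule integral_measure_pmf_real) auto

lemma reach_within_bounds:
  fixes h :: "'s::finite list"
  shows "0 \<le> reach_within delta pi1 pi2 X n h \<and> reach_within delta pi1 pi2 X n h \<le> 1"
proof (induction n arbitrary: h)
  case 0
  then show ?case by simp
next
  case (Suc n)
  let ?p = "step delta pi1 pi2 h"
  let ?E = "\<Sum>t\<in>UNIV. reach_within delta pi1 pi2 X n (h @ [t]) * pmf ?p t"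
  have "?E \<le> (\<Sum>t\<in>UNIV. 1 * pmf ?p t)"
    by (intro sum_mono mult_right_mono) (use Suc in auto)
  also have "\<dots> = 1"
    using sum_pmf_eq_1[of UNIV ?p] by simp
  finally have "?E \<le> 1" .
  moreover have "0 \<le> ?E"
    by (intro sum_nonneg mult_nonneg_nonneg) (use Suc in auto)
  ultimately show ?case
    by (simp add: expectation_pmf_finite)
qed

lemma reach_within_target: "last h \<in> X \<Longrightarrow> reach_within delta pi1 pi2 X n h = 1"
  by (cases n) auto

lemma prob_reach_start_in_target: "s \<in> X \<Longrightarrow> prob_reach delta pi1 pi2 X s = 1"
  unfolding prob_reach_def by (simp add: reach_within_target)

lemma reach_within_fail_mult:
  fixes h :: "'s::finite list"
  assumes fail_n: "\<And>h'. h' \<noteq> [] \<Longrightarrow> 1 - reach_within delta pi1 pi2 X n h' \<le> B"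
    and "0 \<le> B" and "h \<noteq> []"
  shows "1 - reach_within delta pi1 pi2 X (k + n) h
           \<le> B * (1 - reach_within delta pi1 pi2 X k h)"
  using \<open>h \<noteq> []\<close>
proof (induction k arbitrary: h)
  case 0
  then show ?case
    using fail_n by (auto simp: reach_within_target)
next
  case (Suc k)
  show ?case
  proof (cases "last h \<in> X")
    case True
    then show ?thesis by simp
  next
    case False
    let ?p = "step delta pi1 pi2 h"
    let ?f = "\<lambda>t. reach_within delta pi1 pi2 X (k + n) (h @ [t])"
    let ?g = "\<lambda>t. reach_within delta pi1 pi2 X k (h @ [t])"
    have "1 - (\<Sum>t\<in>UNIV. ?f t * pmf ?p t) = (\<Sum>t\<in>UNIV. (1 - ?f t) * pmf ?p t)"
      using sum_pmf_eq_1[of UNIV ?p] by (simp add: left_diff_distrib sum_subtractf)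
    also have "\<dots> \<le> (\<Sum>t\<in>UNIV. B * (1 - ?g t) * pmf ?p t)"
      by (intro sum_mono mult_right_mono Suc.IH) auto
    also have "\<dots> = B * (1 - (\<Sum>t\<in>UNIV. ?g t * pmf ?p t))"
      using sum_pmf_eq_1[of UNIV ?p]
      by (simp add: algebra_simps sum_subtractf flip: sum_distrib_left)
    finally show ?thesis
      using False by (simp add: expectation_pmf_finite)
  qed
qed

lemma prob_reach_eq_1_if_uniform_bound:
  fixes s :: "'s::finite"
  assumes "0 < c" and bound: "\<And>h. h \<noteq> [] \<Longrightarrow> c \<le> reach_within delta pi1 pi2 X K h"
  shows "prob_reach delta pi1 pi2 X s = 1"
proof -
  let ?R = "\<lambda>n h. reach_within delta pi1 pi2 X n h"
  let ?P = "prob_reach delta pi1 pi2 X s"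
  have "c \<le> 1"
    using bound[of "[s]"] reach_within_bounds[of delta pi1 pi2 X K "[s]"] by simp
  have fail: "1 - ?R (m * K) h \<le> (1 - c) ^ m" if "h \<noteq> []" for m h
    using that
  proof (induction m arbitrary: h)
    case 0
    then show ?case
      using reach_within_bounds[of delta pi1 pi2 X 0 h] by simp
  next
    case (Suc m)
    have "1 - ?R (K + m * K) h \<le> (1 - c) ^ m * (1 - ?R K h)"
      by (rule reach_within_fail_mult) (use Suc \<open>c \<le> 1\<close> in auto)
    also have "\<dots> \<le> (1 - c) ^ m * (1 - c)"
      using bound[OF Suc.prems] \<open>c \<le> 1\<close> by (intro mult_left_mono) auto
    finally show ?case
      by (simp add: add.commute mult.commute)
  qed
  have bdd: "bdd_above (range (\<lambda>n. ?R n [s]))"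
    by (rule bdd_aboveI[of _ 1]) (auto simp: reach_within_bounds)
  have "?P \<le> 1"
    unfolding prob_reach_def by (rule cSUP_least) (auto simp: reach_within_bounds)
  moreover have "1 \<le> ?P"
  proof (rule ccontr)
    assume "\<not> 1 \<le> ?P"
    then obtain m where m: "(1 - c) ^ m < 1 - ?P"
      using real_arch_pow_inv[of "1 - ?P" "1 - c"] \<open>0 < c\<close> by auto
    have "?R (m * K) [s] \<le> ?P"
      unfolding prob_reach_def by (rule cSUP_upper[OF _ bdd]) simp
    then show False
      using fail[of "[s]" m] m by simp
  qed
  ultimately show ?thesis by simp
qed

lemma reach_within_trap:
  assumes "Z \<inter> X = {}"
    and stay: "\<And>h. last h \<in> Z \<Longrightarrow> set_pmf (step delta pi1 pi2 h) \<subseteq> Z"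
    and "last h \<in> Z"
  shows "reach_within delta pi1 pi2 X n h = 0"
  using \<open>last h \<in> Z\<close>
proof (induction n arbitrary: h)
  case 0
  then show ?case
    using \<open>Z \<inter> X = {}\<close> by auto
next
  case (Suc n)
  have "measure_pmf.expectation (step delta pi1 pi2 h)
          (\<lambda>t. reach_within delta pi1 pi2 X n (h @ [t])) = 0"
    using stay[OF Suc.prems] Suc.IH by (intro integral_eq_zero_AE) (auto simp: AE_measure_pmf_iff)
  then show ?case
    using Suc.prems \<open>Z \<inter> X = {}\<close> by auto
qed

definition move_distr :: "('s \<Rightarrow> 'm \<Rightarrow> 'm \<Rightarrow> 's pmf) \<Rightarrow> ('s \<Rightarrow> 'm pmf) \<Rightarrow> 's \<Rightarrow> 'm \<Rightarrow> 's pmf" where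
  "move_distr delta xi1 s a2 = bind_pmf (xi1 s) (\<lambda>a1. delta s a1 a2)"

lemma step_memoryless:
  "step delta (memoryless xi1) pi2 h = bind_pmf (pi2 h) (move_distr delta xi1 (last h))"
  unfolding step_def memoryless_def move_distr_def by (rule bind_commute_pmf)

fun pos_attr :: "('s \<Rightarrow> 'm set) \<Rightarrow> ('s \<Rightarrow> 'm \<Rightarrow> 's pmf) \<Rightarrow> 's set \<Rightarrow> nat \<Rightarrow> 's set" where
  "pos_attr G2 P X 0 = X"
| "pos_attr G2 P X (Suc k) = X \<union> {s. \<forall>a\<in>G2 s. set_pmf (P s a) \<inter> pos_attr G2 P X k \<noteq> {}}"

lemma pos_attr_Suc_mono: "pos_attr G2 P X k \<subseteq> pos_attr G2 P X (Suc k)"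
proof (induction k)
  case 0
  then show ?case by simp
next
  case (Suc k)
  have "{s. \<forall>a\<in>G2 s. set_pmf (P s a) \<inter> pos_attr G2 P X k \<noteq> {}}
          \<subseteq> {s. \<forall>a\<in>G2 s. set_pmf (P s a) \<inter> pos_attr G2 P X (Suc k) \<noteq> {}}"
    using Suc.IH by blast
  then have "X \<union> {s. \<forall>a\<in>G2 s. set_pmf (P s a) \<inter> pos_attr G2 P X k \<noteq> {}}
          \<subseteq> X \<union> {s. \<forall>a\<in>G2 s. set_pmf (P s a) \<inter> pos_attr G2 P X (Suc k) \<noteq> {}}"
    by blast
  then show ?case
    by (simp only: pos_attr.simps(2)[symmetric])
qed

lemma finite_chain_stabilises:
  fixes L :: "nat \<Rightarrow> 'a::finite set"
  assumes mono: "\<And>k. L k \<subseteq> L (Suc k)"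
  shows "\<exists>K. L (Suc K) \<subseteq> L K"
proof (rule ccontr)
  assume "\<nexists>K. L (Suc K) \<subseteq> L K"
  then have grows: "L K \<subset> L (Suc K)" for K
    using mono by blast
  have "K \<le> card (L K)" for K
  proof (induction K)
    case (Suc K)
    then show ?case
      using psubset_card_mono[OF finite grows[of K]] by simp
  qed simp
  moreover have "card (L (Suc CARD('a))) \<le> CARD('a)"
    by (rule card_mono) auto
  ultimately show False
    by (metis Suc_n_not_le_n le_trans)
qed

lemma pos_attr_compl_trap:
  assumes "pos_attr G2 P X (Suc K) \<subseteq> pos_attr G2 P X K" and "s \<notin> pos_attr G2 P X K"
  shows "s \<notin> X \<and> (\<exists>a\<in>G2 s. set_pmf (P s a) \<subseteq> - pos_attr G2 P X K)"
  using assms by (simp add: disjoint_eq_subset_Compl) blast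

lemma uniform_pmf_lower_bound:
  fixes P :: "'i::finite \<Rightarrow> 'a::finite pmf"
  obtains q where "0 < q" "q \<le> 1" "\<And>i t. t \<in> set_pmf (P i) \<Longrightarrow> q \<le> pmf (P i) t"
proof -
  define Q where "Q = (\<lambda>(i, t). pmf (P i) t) ` {(i, t). t \<in> set_pmf (P i)}"
  fix i :: 'i
  obtain t where t: "t \<in> set_pmf (P i)"
    using set_pmf_not_empty by fast
  have "finite Q" "Q \<noteq> {}"
    unfolding Q_def using t by auto
  have Min_le: "Min Q \<le> pmf (P j) u" if "u \<in> set_pmf (P j)" for j u
    using \<open>finite Q\<close> that unfolding Q_def by (intro Min_le) auto
  show ?thesis
  proof (rule that)
    show "0 < Min Q"
      using \<open>finite Q\<close> \<open>Q \<noteq> {}\<close> by (subst Min_gr_iff) (auto simp: Q_def set_pmf_iff)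
    show "Min Q \<le> 1"
      using Min_le[OF t] pmf_le_1[of "P i" t] by linarith
  qed (rule Min_le)
qed

lemma pos_attr_reach_bound:
  fixes delta :: "'s::finite \<Rightarrow> 'm::finite \<Rightarrow> 'm \<Rightarrow> 's pmf"
  assumes "strategy G2 pi2" and "0 \<le> q" "q \<le> 1"
    and q_le: "\<And>s a t. t \<in> set_pmf (move_distr delta xi1 s a) \<Longrightarrow> q \<le> pmf (move_distr delta xi1 s a) t"
    and "h \<noteq> []" and "last h \<in> pos_attr G2 (move_distr delta xi1) X k"
  shows "q ^ k \<le> reach_within delta (memoryless xi1) pi2 X k h"
  using \<open>h \<noteq> []\<close> \<open>last h \<in> _\<close>
proof (induction k arbitrary: h)
  case 0
  then show ?case by simp
next
  case (Suc k)
  let ?P = "move_distr delta xi1 (last h)"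
  let ?f = "\<lambda>t. reach_within delta (memoryless xi1) pi2 X k (h @ [t])"
  show ?case
  proof (cases "last h \<in> X")
    case True
    then show ?thesis
      using \<open>0 \<le> q\<close> \<open>q \<le> 1\<close> by (simp add: power_le_one mult_le_one)
  next
    case False
    have per_move: "q ^ Suc k \<le> measure_pmf.expectation (?P a) ?f" if "a \<in> set_pmf (pi2 h)" for a
    proof -
      have "a \<in> G2 (last h)"
        using that \<open>strategy G2 pi2\<close> Suc.prems(1) unfolding strategy_def by blast
      then obtain t where t: "t \<in> set_pmf (?P a)" "t \<in> pos_attr G2 (move_distr delta xi1) X k"
        using Suc.prems(2) False by auto
      have "q ^ Suc k = q ^ k * q" by simp
      also have "\<dots> \<le> ?f t * pmf (?P a) t"
        using Suc.IH[of "h @ [t]"] t q_le \<open>0 \<le> q\<close> by (intro mult_mono) (auto simp: reach_within_bounds)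
      also have "\<dots> \<le> (\<Sum>u\<in>UNIV. ?f u * pmf (?P a) u)"
        by (rule member_le_sum) (auto simp: reach_within_bounds)
      finally show ?thesis
        by (simp add: expectation_pmf_finite)
    qed
    have "q ^ Suc k = measure_pmf.expectation (pi2 h) (\<lambda>_. q ^ Suc k)"
      by simp
    also have "\<dots> \<le> measure_pmf.expectation (pi2 h) (\<lambda>a. measure_pmf.expectation (?P a) ?f)"
      using per_move by (intro integral_mono_AE) (auto simp: AE_measure_pmf_iff integrable_measure_pmf_finite)
    also have "\<dots> = measure_pmf.expectation (step delta (memoryless xi1) pi2 h) ?f"
      unfolding step_memoryless by (subst pmf_expectation_bind[of UNIV]) (auto simp: expectation_pmf_finite mult.commute)
    finally show ?thesis
      using False by simp
  qed
qed

lemma strategy_memoryless: "selector G xi \<Longrightarrow> strategy G (memoryless xi)"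
  unfolding strategy_def selector_def memoryless_def by auto

lemma trap_pure_selector:
  assumes "game G1 G2 delta"
    and trap: "\<And>s. s \<in> Z \<Longrightarrow> \<exists>a\<in>G2 s. set_pmf (move_distr delta xi1 s a) \<subseteq> Z"
  obtains xi2 where "pure_selector G2 xi2"
    "\<And>h. last h \<in> Z \<Longrightarrow> set_pmf (step delta (memoryless xi1) (memoryless xi2) h) \<subseteq> Z"
proof -
  have "\<forall>s. \<exists>a. a \<in> G2 s \<and> (s \<in> Z \<longrightarrow> set_pmf (move_distr delta xi1 s a) \<subseteq> Z)"
    using trap \<open>game G1 G2 delta\<close> unfolding game_def by (metis ex_in_conv)
  then obtain ch where ch: "\<And>s. ch s \<in> G2 s \<and> (s \<in> Z \<longrightarrow> set_pmf (move_distr delta xi1 s (ch s)) \<subseteq> Z)"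
    by metis
  show ?thesis
  proof (rule that[of "\<lambda>s. return_pmf (ch s)"])
    show "pure_selector G2 (\<lambda>s. return_pmf (ch s))"
      unfolding pure_selector_def selector_def using ch by auto
  qed (use ch in \<open>auto simp: memoryless_def step_memoryless[unfolded memoryless_def]\<close>)
qed

lemma prob_reach_eq_1_if_pure_selectors:
  fixes delta :: "'s::finite \<Rightarrow> 'm::finite \<Rightarrow> 'm \<Rightarrow> 's pmf"
  assumes "game G1 G2 delta"
    and pure: "\<forall>xi2. pure_selector G2 xi2 \<longrightarrow> (\<forall>s. prob_reach delta (memoryless xi1) (memoryless xi2) X s = 1)"
    and "strategy G2 pi2"
  shows "prob_reach delta (memoryless xi1) pi2 X s = 1"
proof -
  let ?L = "pos_attr G2 (move_distr delta xi1) X"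
  obtain K where K: "?L (Suc K) \<subseteq> ?L K"
    using finite_chain_stabilises[of ?L, OF pos_attr_Suc_mono] by blast
  have "?L K = UNIV"
  proof (rule ccontr)
    assume "?L K \<noteq> UNIV"
    then obtain s0 where "s0 \<in> - ?L K" by blast
    have "- ?L K \<inter> X = {}"
      and trap: "\<And>s. s \<in> - ?L K \<Longrightarrow> \<exists>a\<in>G2 s. set_pmf (move_distr delta xi1 s a) \<subseteq> - ?L K"
      using pos_attr_compl_trap[OF K] by blast+
    obtain xi2 where "pure_selector G2 xi2"
      and stay: "\<And>h. last h \<in> - ?L K \<Longrightarrow> set_pmf (step delta (memoryless xi1) (memoryless xi2) h) \<subseteq> - ?L K"
      using trap_pure_selector[OF \<open>game G1 G2 delta\<close> trap] by blast
    have "prob_reach delta (memoryless xi1) (memoryless xi2) X s0 = 0"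
      unfolding prob_reach_def
      using reach_within_trap[OF \<open>- ?L K \<inter> X = {}\<close> stay] \<open>s0 \<in> - ?L K\<close> by simp
    then show False
      using pure \<open>pure_selector G2 xi2\<close> by simp
  qed
  obtain q where "0 < q" "q \<le> 1"
    and q_pair: "\<And>sa t. t \<in> set_pmf (case_prod (move_distr delta xi1) sa)
                   \<Longrightarrow> q \<le> pmf (case_prod (move_distr delta xi1) sa) t"
    using uniform_pmf_lower_bound[of "case_prod (move_distr delta xi1)"] by blast
  have q_le: "q \<le> pmf (move_distr delta xi1 s a) t" if "t \<in> set_pmf (move_distr delta xi1 s a)" for s a t
    using q_pair[where sa = "(s, a)"] that by simp
  show ?thesis
  proof (rule prob_reach_eq_1_if_uniform_bound)
    show "0 < q ^ K" using \<open>0 < q\<close> by simp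
    show "q ^ K \<le> reach_within delta (memoryless xi1) pi2 X K h" if "h \<noteq> []" for h
      using pos_attr_reach_bound[OF \<open>strategy G2 pi2\<close> _ \<open>q \<le> 1\<close> q_le that] \<open>0 < q\<close> \<open>?L K = UNIV\<close>
      by simp
  qed
qed

theorem lemma1:
  fixes G1 G2 :: "'s::finite \<Rightarrow> 'm::finite set"
    and delta :: "'s \<Rightarrow> 'm \<Rightarrow> 'm \<Rightarrow> 's pmf"
    and T :: "'s set"
    and xi1 :: "'s \<Rightarrow> 'm pmf"
  assumes "game G1 G2 delta"
    and "\<forall>s \<in> T \<union> W2 G1 G2 delta T. absorbing G1 G2 delta s"
    and "selector G1 xi1"
  shows "proper G1 G2 delta T (memoryless xi1) \<longleftrightarrow>
         (\<forall>xi2. pure_selector G2 xi2 \<longrightarrow>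
            (\<forall>s. prob_reach delta (memoryless xi1) (memoryless xi2) (T \<union> W2 G1 G2 delta T) s = 1))"
proof -
  let ?X = "T \<union> W2 G1 G2 delta T"
  have "proper G1 G2 delta T (memoryless xi1) \<longleftrightarrow>
        (\<forall>pi2. strategy G2 pi2 \<longrightarrow> (\<forall>s. prob_reach delta (memoryless xi1) pi2 ?X s = 1))"
    unfolding proper_def using prob_reach_start_in_target by metis
  then show ?thesis
    using strategy_memoryless pure_selector_def
      prob_reach_eq_1_if_pure_selectors[OF \<open>game G1 G2 delta\<close>]
    by metis
qed

end
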